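(* Let $k\ge l\ge0$ and $H\in\mathcal{H}_{k,l}(\mathbb{R}^{2m},\mathbb{C})$. For every integer $i>0$, $$A\,C^iH=c_i(k,l)\,C^{i-1}H,\qquad c_i(k,l)=i\,\frac{(k+\frac m2+i-1)(k+l+m+i-3)}{k+\frac m2+i-2}.$$
   Context: Fix an integer $m>4$. For $x,u\in\mathbb{R}^m$ let $\mathcal{P}_{p,q}(\mathbb{R}^{2m},\mathbb{C})$ be complex polynomials of degree $p$ in $x$ and $q$ in $u$. Write $|x|^2=\sum x_j^2$, $\langle u,x\rangle=\sum u_jx_j$, $\Delta_x=\sum\partial_{x_j}^2$, $\Delta_u=\sum\partial_{u_j}^2$, $\langle\partial_u,\partial_x\rangle=\sum\partial_{u_j}\partial_{x_j}$, $\langle x,\partial_u\rangle=\sum x_j\partial_{u_j}$, $\ker(D_1,\dots,D_r)=\bigcap\ker D_i$. Every $P\in\mathcal{P}_{p,q}$ is uniquely $\sum_{a,b\ge0}|x|^{2a}|u|^{2b}H'_{p-2a,q-2b}$ with $H'_{p-2a,q-2b}\in\mathcal{P}_{p-2a,q-2b}\cap\ker(\Delta_x,\Delta_u)$; $\pi_{\mathfrak{s}}P:=H'_{p,q}$. On $\ker(\Delta_x,\Delta_u)$: $A=\pi_{\mathfrak{s}}\langle\partial_u,\partial_x\rangle$, $C=\pi_{\mathfrak{s}}\langle u,x\rangle$. For $k\ge l\ge0$, $\mathcal{H}_{k,l}=\mathcal{P}_{k,l}\cap\ker(\Delta_x,\Delta_u,\langle\partial_u,\partial_x\rangle,\langle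 x,\partial_u\rangle)$. *)

theory Defs
  imports Complex_Main "HOL-Library.Poly_Mapping"
begin

text \<open>Complex polynomials in the 2m real variables x_1..x_m, u_1..u_m.
  The index type 'n (finite, CARD('n) = m) labels coordinates; Inl j is x_j, Inr j is u_j.\<close>

type_synonym 'n mpoly = "(('n + 'n) \<Rightarrow>\<^sub>0 nat) \<Rightarrow>\<^sub>0 complex"

definition const :: "complex \<Rightarrow> 'n mpoly" where
  "const c = Poly_Mapping.single 0 c"

definition Xv :: "'n \<Rightarrow> 'n mpoly" where
  "Xv j = Poly_Mapping.single (Poly_Mapping.single (Inl j) 1) 1"

definition Uv :: "'n \<Rightarrow> 'n mpoly" where
  "Uv j = Poly_Mapping.single (Poly_Mapping.single (Inr j) 1) 1"

definition pd :: "('n + 'n) \<Rightarrow> 'n mpoly \<Rightarrow> 'n mpoly" where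
  "pd v P = (\<Sum>\<alpha>\<in>Poly_Mapping.keys P. Poly_Mapping.single (\<alpha> - Poly_Mapping.single v (1::nat))
                              (of_nat (Poly_Mapping.lookup (\<alpha>::('n + 'n) \<Rightarrow>\<^sub>0 nat) v) * Poly_Mapping.lookup P \<alpha>))"

definition degx :: "(('n::finite + 'n) \<Rightarrow>\<^sub>0 nat) \<Rightarrow> nat" where
  "degx \<alpha> = (\<Sum>j\<in>UNIV. Poly_Mapping.lookup \<alpha> (Inl j))"

definition degu :: "(('n::finite + 'n) \<Rightarrow>\<^sub>0 nat) \<Rightarrow> nat" where
  "degu \<alpha> = (\<Sum>j\<in>UNIV. Poly_Mapping.lookup \<alpha> (Inr j))"

definition bihom :: "nat \<Rightarrow> nat \<Rightarrow> 'n::finite mpoly \<Rightarrow> bool" where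
  "bihom p q P \<longleftrightarrow> (\<forall>\<alpha>\<in>Poly_Mapping.keys P. degx \<alpha> = p \<and> degu \<alpha> = q)"

definition Lap_x :: "'n::finite mpoly \<Rightarrow> 'n mpoly" where
  "Lap_x P = (\<Sum>j\<in>UNIV. pd (Inl j) (pd (Inl j) P))"

definition Lap_u :: "'n::finite mpoly \<Rightarrow> 'n mpoly" where
  "Lap_u P = (\<Sum>j\<in>UNIV. pd (Inr j) (pd (Inr j) P))"

definition Dux :: "'n::finite mpoly \<Rightarrow> 'n mpoly" where
  "Dux P = (\<Sum>j\<in>UNIV. pd (Inr j) (pd (Inl j) P))"

definition Xdu :: "'n::finite mpoly \<Rightarrow> 'n mpoly" where
  "Xdu P = (\<Sum>j\<in>UNIV. Xv j * pd (Inr j) P)"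

definition normx2 :: "'n::finite mpoly" where
  "normx2 = (\<Sum>j\<in>UNIV. Xv j ^ 2)"

definition normu2 :: "'n::finite mpoly" where
  "normu2 = (\<Sum>j\<in>UNIV. Uv j ^ 2)"

definition ux :: "'n::finite mpoly" where
  "ux = (\<Sum>j\<in>UNIV. Uv j * Xv j)"

definition harm2 :: "'n::finite mpoly \<Rightarrow> bool" where
  "harm2 P \<longleftrightarrow> Lap_x P = 0 \<and> Lap_u P = 0"

definition pi_hom :: "nat \<Rightarrow> nat \<Rightarrow> 'n::finite mpoly \<Rightarrow> 'n mpoly" where
  "pi_hom p q P = (THE H. \<exists>Hf :: nat \<Rightarrow> nat \<Rightarrow> 'n mpoly.
      (\<forall>a b. 2*a \<le> p \<and> 2*b \<le> q \<longrightarrow> bihom (p - 2*a) (q - 2*b) (Hf a b) \<and> harm2 (Hf a b)) \<and>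
      P = (\<Sum>a\<le>p div 2. \<Sum>b\<le>q div 2. normx2 ^ a * normu2 ^ b * Hf a b) \<and>
      H = Hf 0 0)"

definition bipart :: "nat \<Rightarrow> nat \<Rightarrow> 'n::finite mpoly \<Rightarrow> 'n mpoly" where
  "bipart p q P = (\<Sum>\<alpha>\<in>{\<alpha>\<in>Poly_Mapping.keys P. degx \<alpha> = p \<and> degu \<alpha> = q}. Poly_Mapping.single \<alpha> (Poly_Mapping.lookup P \<alpha>))"

definition pi_s :: "'n::finite mpoly \<Rightarrow> 'n mpoly" where
  "pi_s P = (\<Sum>(p,q)\<in>(\<lambda>\<alpha>. (degx \<alpha>, degu \<alpha>)) ` Poly_Mapping.keys P. pi_hom p q (bipart p q P))"

definition Aop :: "'n::finite mpoly \<Rightarrow> 'n mpoly" where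
  "Aop P = pi_s (Dux P)"

definition Cop :: "'n::finite mpoly \<Rightarrow> 'n mpoly" where
  "Cop P = pi_s (ux * P)"

definition Hkl :: "nat \<Rightarrow> nat \<Rightarrow> 'n::finite mpoly set" where
  "Hkl k l = {H. bihom k l H \<and> Lap_x H = 0 \<and> Lap_u H = 0 \<and> Dux H = 0 \<and> Xdu H = 0}"

definition cconst :: "nat \<Rightarrow> nat \<Rightarrow> nat \<Rightarrow> nat \<Rightarrow> real" where
  "cconst m i k l = real i * (real k + real m / 2 + real i - 1) * (real k + real l + real m + real i - 3)
                     / (real k + real m / 2 + real i - 2)"

end

theory Submission
  imports Defs
begin

text \<open>Write \<open>E = \<langle>u,\<partial>\<^sub>x\<rangle>\<close>, \<open>F = \<langle>x,\<partial>\<^sub>u\<rangle>\<close>, \<open>D = \<langle>\<partial>\<^sub>u,\<partial>\<^sub>x\<rangle>\<close> and \<open>\<alpha>\<^sub>p = m + 2p - 2\<close>. If \<open>Q\<close> is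
  bihomogeneous of bidegree \<open>(p,q)\<close> and harmonic in \<open>x\<close> and in \<open>u\<close>, then
  \<open>\<langle>u,x\<rangle>Q = CQ + |x|\<^sup>2 G\<^sub>1 + |u|\<^sup>2 G\<^sub>2 + |x|\<^sup>2|u|\<^sup>2 G\<^sub>3\<close> with
  \<open>CQ = \<langle>u,x\<rangle>Q - |x|\<^sup>2EQ/\<alpha>\<^sub>p - |u|\<^sup>2FQ/\<alpha>\<^sub>q + |x|\<^sup>2|u|\<^sup>2DQ/(\<alpha>\<^sub>p\<alpha>\<^sub>q)\<close> and all four
  components harmonic, so by uniqueness of the Fischer decomposition this \<open>CQ\<close> is \<open>\<pi>\<^sub>s(\<langle>u,x\<rangle>Q)\<close>;
  likewise \<open>AQ = DQ\<close>, because \<open>D\<close> preserves harmonicity.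

  The Casimir operator of the diagonal \<open>so(m)\<close>-action commutes with multiplication by
  \<open>\<langle>u,x\<rangle>, |x|\<^sup>2, |u|\<^sup>2\<close> and with \<open>E, F, D\<close>, so every \<open>C\<^sup>iH\<close> has the Casimir eigenvalue of \<open>H\<close>.
  This eigenvalue determines \<open>EFQ\<close> in terms of \<open>\<langle>u,x\<rangle>DQ\<close> and \<open>Q\<close>, which gives
  \<open>D(CQ) = \<sigma>Q + \<rho> C(DQ)\<close> with explicit scalars \<open>\<sigma>, \<rho>\<close>. Hence \<open>DC\<^sup>i\<^sup>+\<^sup>1H = c\<^sub>i\<^sub>+\<^sub>1 C\<^sup>iH\<close> where
  \<open>c\<^sub>0 = 0\<close> and \<open>c\<^sub>i\<^sub>+\<^sub>1 = \<sigma> + \<rho>c\<^sub>i\<close>, a recurrence solved by the closed formula for \<open>c\<^sub>i(k,l)\<close>.\<close>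

abbreviation unit_exp :: "('n + 'n) \<Rightarrow> ('n + 'n) \<Rightarrow>\<^sub>0 nat" where
  "unit_exp v \<equiv> Poly_Mapping.single v 1"

definition var :: "('n + 'n) \<Rightarrow> 'n mpoly" where
  "var v = Poly_Mapping.single (unit_exp v) 1"

lemma Xv_var: "Xv = (\<lambda>j. var (Inl j))" and Uv_var: "Uv = (\<lambda>j. var (Inr j))"
  by (simp_all add: fun_eq_iff Xv_def Uv_def var_def)

lemma const_add: "const (a + b) = const a + const b"
  and const_diff: "const (a - b) = const a - const b"
  and const_uminus: "const (- a) = - const a"
  and const_mult: "const (a * b) = const a * const b"
  and const_of_nat: "const (of_nat n) = of_nat n"
  and const_numeral: "const (numeral k) = numeral k"
  and const_1: "const 1 = 1"
  and const_0: "const 0 = 0"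
  by (simp_all add: const_def single_add single_diff single_uminus mult_single)

lemma const_power: "const (x ^ n) = const x ^ n"
  by (induction n) (simp_all add: const_mult const_1)

lemmas const_hom = const_add const_diff const_uminus const_mult const_of_nat const_numeral const_1 const_0
  const_power

lemma mpoly_monomial_sum: "(P::'n mpoly) = (\<Sum>\<alpha>\<in>Poly_Mapping.keys P. Poly_Mapping.single \<alpha> (Poly_Mapping.lookup P \<alpha>))"
  by (rule poly_mapping_eqI) (simp add: lookup_sum lookup_single when_def in_keys_iff)

lemma diff_unit_exp_eq_iff:
  fixes \<alpha> \<beta> :: "('n + 'n) \<Rightarrow>\<^sub>0 nat"
  assumes "Poly_Mapping.lookup \<alpha> v \<noteq> 0"
  shows "\<alpha> - unit_exp v = \<beta> \<longleftrightarrow> \<alpha> = \<beta> + unit_exp v"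
proof
  assume "\<alpha> - unit_exp v = \<beta>"
  then show "\<alpha> = \<beta> + unit_exp v"
    using assms by (auto intro!: poly_mapping_eqI simp: lookup_minus lookup_add lookup_single when_def)
qed (auto intro!: poly_mapping_eqI simp: lookup_minus lookup_add lookup_single when_def)

lemma pd_single:
  "pd v (Poly_Mapping.single \<alpha> c) = Poly_Mapping.single (\<alpha> - unit_exp v) (of_nat (Poly_Mapping.lookup \<alpha> v) * c)"
  by (simp add: pd_def)

lemma lookup_pd:
  "Poly_Mapping.lookup (pd v P) \<beta> = of_nat (Poly_Mapping.lookup \<beta> v + 1) * Poly_Mapping.lookup P (\<beta> + unit_exp v)"
proof -
  have "Poly_Mapping.lookup (pd v P) \<beta> =
     (\<Sum>\<alpha>\<in>Poly_Mapping.keys P. (of_nat (Poly_Mapping.lookup \<alpha> v) * Poly_Mapping.lookup P \<alpha>) when \<alpha> - unit_exp v = \<beta>)"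
    by (simp add: pd_def lookup_sum lookup_single when_def eq_commute)
  also have "\<dots> = (\<Sum>\<alpha>\<in>Poly_Mapping.keys P.
      (of_nat (Poly_Mapping.lookup \<beta> v + 1) * Poly_Mapping.lookup P \<alpha>) when \<alpha> = \<beta> + unit_exp v)"
  proof (rule sum.cong[OF refl])
    fix \<alpha>
    show "((of_nat (Poly_Mapping.lookup \<alpha> v) * Poly_Mapping.lookup P \<alpha>) when \<alpha> - unit_exp v = \<beta>) =
       ((of_nat (Poly_Mapping.lookup \<beta> v + 1) * Poly_Mapping.lookup P \<alpha>) when \<alpha> = \<beta> + unit_exp v)"
    proof (cases "Poly_Mapping.lookup \<alpha> v = 0")
      case True
      then have "\<alpha> \<noteq> \<beta> + unit_exp v" by (auto simp: lookup_add)
      with True show ?thesis by (simp add: when_def)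
    next
      case False
      then show ?thesis
        by (cases "\<alpha> = \<beta> + unit_exp v")
           (use diff_unit_exp_eq_iff[OF False, of \<beta>] in \<open>auto simp: when_def lookup_add\<close>)
    qed
  qed
  also have "\<dots> = of_nat (Poly_Mapping.lookup \<beta> v + 1) * Poly_Mapping.lookup P (\<beta> + unit_exp v)"
    by (simp add: when_def in_keys_iff)
  finally show ?thesis .
qed

lemma pd_add: "pd v (P + Q) = pd v P + pd v Q"
  and pd_zero [simp]: "pd v 0 = 0"
  and pd_diff: "pd v (P - Q) = pd v P - pd v Q"
  by (simp_all add: poly_mapping_eq_iff fun_eq_iff lookup_pd lookup_add lookup_minus algebra_simps)

lemma pd_sum: "pd v (sum f S) = (\<Sum>x\<in>S. pd v (f x))"
  by (induction S rule: infinite_finite_induct) (simp_all add: pd_add)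

lemma pd_commute: "pd v (pd w P) = pd w (pd v P)"
  by (cases "v = w")
     (auto simp: poly_mapping_eq_iff fun_eq_iff lookup_pd lookup_add lookup_single when_def algebra_simps)

lemma pd_monomial_mult:
  "pd v (Poly_Mapping.single \<alpha> a * Poly_Mapping.single \<beta> b) =
   pd v (Poly_Mapping.single \<alpha> a) * Poly_Mapping.single \<beta> b + Poly_Mapping.single \<alpha> a * pd v (Poly_Mapping.single \<beta> (b::complex))"
proof -
  have shift: "\<gamma> - unit_exp v + \<delta> = \<gamma> + \<delta> - unit_exp v" if "Poly_Mapping.lookup \<gamma> v \<noteq> 0" for \<gamma> \<delta> :: "('a + 'a) \<Rightarrow>\<^sub>0 nat"
    using that by (auto intro!: poly_mapping_eqI simp: lookup_add lookup_minus lookup_single when_def)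
  have "pd v (Poly_Mapping.single \<alpha> a) * Poly_Mapping.single \<beta> b =
     Poly_Mapping.single (\<alpha> + \<beta> - unit_exp v) (of_nat (Poly_Mapping.lookup \<alpha> v) * (a * b))"
  proof (cases "Poly_Mapping.lookup \<alpha> v = 0")
    case False
    then show ?thesis by (simp only: pd_single mult_single shift[OF False] mult.assoc)
  qed (simp add: pd_single)
  moreover have "Poly_Mapping.single \<alpha> a * pd v (Poly_Mapping.single \<beta> b) =
     Poly_Mapping.single (\<alpha> + \<beta> - unit_exp v) (of_nat (Poly_Mapping.lookup \<beta> v) * (a * b))"
  proof (cases "Poly_Mapping.lookup \<beta> v = 0")
    case False
    then show ?thesis
      by (simp only: pd_single mult_single add.commute[of \<alpha>] shift[OF False] mult.left_commute)
  qed (simp add: pd_single)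
  ultimately show ?thesis
    by (simp only: mult_single pd_single lookup_add of_nat_add distrib_right single_add)
qed

lemma pd_mult: "pd v (P * Q) = pd v P * Q + P * pd v (Q::'n mpoly)"
proof -
  have "pd v ((\<Sum>\<alpha>\<in>Poly_Mapping.keys P. Poly_Mapping.single \<alpha> (Poly_Mapping.lookup P \<alpha>)) *
              (\<Sum>\<beta>\<in>Poly_Mapping.keys Q. Poly_Mapping.single \<beta> (Poly_Mapping.lookup Q \<beta>))) =
     pd v (\<Sum>\<alpha>\<in>Poly_Mapping.keys P. Poly_Mapping.single \<alpha> (Poly_Mapping.lookup P \<alpha>)) *
       (\<Sum>\<beta>\<in>Poly_Mapping.keys Q. Poly_Mapping.single \<beta> (Poly_Mapping.lookup Q \<beta>)) +
     (\<Sum>\<alpha>\<in>Poly_Mapping.keys P. Poly_Mapping.single \<alpha> (Poly_Mapping.lookup P \<alpha>)) *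
       pd v (\<Sum>\<beta>\<in>Poly_Mapping.keys Q. Poly_Mapping.single \<beta> (Poly_Mapping.lookup Q \<beta>))"
    by (simp add: sum_product pd_sum pd_monomial_mult sum.distrib)
  then show ?thesis
    by (simp only: mpoly_monomial_sum[symmetric])
qed

lemma pd_const [simp]: "pd v (const c) = 0"
  and pd_one [simp]: "pd v 1 = 0"
  and pd_numeral [simp]: "pd v (numeral n) = 0"
  and pd_of_nat [simp]: "pd v (of_nat k) = 0"
  by (simp_all add: const_def pd_single flip: single_one single_numeral single_of_nat)

lemma pd_var [simp]: "pd v (var w) = of_bool (v = w)"
  by (simp add: var_def pd_single lookup_single)

lemma pd_of_bool [simp]: "pd v (of_bool b) = 0"
  by (cases b) simp_all

lemma pd_power_eq_0: "pd v P = 0 \<Longrightarrow> pd v (P ^ n) = 0"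
  by (induction n) (simp_all add: pd_mult)

definition first_order :: "('n::finite \<Rightarrow> 'n mpoly) \<Rightarrow> ('n \<Rightarrow> 'n + 'n) \<Rightarrow> 'n mpoly \<Rightarrow> 'n mpoly" where
  "first_order a v X = (\<Sum>j\<in>UNIV. a j * pd (v j) X)"

definition second_order :: "('n::finite \<Rightarrow> 'n + 'n) \<Rightarrow> ('n \<Rightarrow> 'n + 'n) \<Rightarrow> 'n mpoly \<Rightarrow> 'n mpoly" where
  "second_order v w X = (\<Sum>j\<in>UNIV. pd (v j) (pd (w j) X))"

lemma first_order_add [simp]: "first_order a v (X + Y) = first_order a v X + first_order a v Y"
  and first_order_zero [simp]: "first_order a v 0 = 0"
  and first_order_diff [simp]: "first_order a v (X - Y) = first_order a v X - first_order a v Y"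
  and first_order_scale [simp]: "first_order (\<lambda>j. c * a j) v X = c * first_order a v X"
  and first_order_zero_coeff [simp]: "first_order (\<lambda>j. 0) v X = 0"
  by (simp_all add: first_order_def pd_add pd_diff distrib_left right_diff_distrib
      sum.distrib sum_subtractf sum_distrib_left mult.assoc)

lemma first_order_sum: "first_order a v (sum f S) = (\<Sum>x\<in>S. first_order a v (f x))"
  by (induction S rule: infinite_finite_induct) simp_all

lemma first_order_mult [simp]:
  "first_order a v (f * X) = f * first_order a v X + first_order a v f * X"
  by (simp add: first_order_def pd_mult distrib_left sum.distrib sum_distrib_left sum_distrib_right algebra_simps)

lemma first_order_const [simp]:
  "first_order a v (const c) = 0" "first_order a v 1 = 0" "first_order a v (numeral n) = 0"
  "first_order a v (of_nat k) = 0"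
  by (simp_all add: first_order_def)

lemma second_order_add [simp]: "second_order v w (X + Y) = second_order v w X + second_order v w Y"
  and second_order_zero [simp]: "second_order v w 0 = 0"
  and second_order_diff [simp]: "second_order v w (X - Y) = second_order v w X - second_order v w Y"
  by (simp_all add: second_order_def pd_add pd_diff sum.distrib sum_subtractf)

lemma second_order_sum: "second_order v w (sum f S) = (\<Sum>x\<in>S. second_order v w (f x))"
  by (induction S rule: infinite_finite_induct) simp_all

lemma second_order_const [simp]:
  "second_order v w (const c) = 0" "second_order v w 1 = 0" "second_order v w (numeral n) = 0"
  "second_order v w (of_nat k) = 0"
  by (simp_all add: second_order_def)

lemma second_order_mult [simp]:
  "second_order v w (f * X) = f * second_order v w X + first_order (\<lambda>j. pd (v j) f) w X
     + first_order (\<lambda>j. pd (w j) f) v X + second_order v w f * X"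
  by (simp add: second_order_def first_order_def pd_mult pd_add distrib_left sum.distrib
      sum_distrib_left sum_distrib_right algebra_simps)

lemma first_order_commutator:
  "first_order a v (first_order b w X) = first_order b w (first_order a v X)
     + first_order (\<lambda>k. first_order a v (b k)) w X - first_order (\<lambda>j. first_order b w (a j)) v X"
proof -
  define A1 where "A1 = (\<Sum>j\<in>UNIV. \<Sum>k\<in>UNIV. a j * pd (v j) (b k) * pd (w k) X)"
  define A2 where "A2 = (\<Sum>j\<in>UNIV. \<Sum>k\<in>UNIV. a j * b k * pd (v j) (pd (w k) X))"
  define B1 where "B1 = (\<Sum>k\<in>UNIV. \<Sum>j\<in>UNIV. b k * pd (w k) (a j) * pd (v j) X)"
  define B2 where "B2 = (\<Sum>k\<in>UNIV. \<Sum>j\<in>UNIV. b k * a j * pd (w k) (pd (v j) X))"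
  have "first_order a v (first_order b w X) = A1 + A2"
    unfolding A1_def A2_def first_order_def
    by (simp add: pd_sum pd_mult sum_distrib_left distrib_left sum.distrib mult.assoc mult.left_commute)
  moreover have "first_order b w (first_order a v X) = B1 + B2"
    unfolding B1_def B2_def first_order_def
    by (simp add: pd_sum pd_mult sum_distrib_left distrib_left sum.distrib mult.assoc mult.left_commute)
  moreover have "A2 = B2"
    unfolding A2_def B2_def by (subst sum.swap) (simp add: pd_commute mult.commute)
  moreover have "first_order (\<lambda>k. first_order a v (b k)) w X = A1"
    unfolding A1_def first_order_def sum_distrib_right by (rule sum.swap)
  moreover have "first_order (\<lambda>j. first_order b w (a j)) v X = B1"
    unfolding B1_def first_order_def sum_distrib_right by (rule sum.swap)
  ultimately show ?thesis by simp
qed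

lemma second_order_commute: "second_order v w (second_order v' w' X) = second_order v' w' (second_order v w X)"
  unfolding second_order_def by (simp add: pd_sum) (subst sum.swap, simp add: pd_commute)

lemma second_order_first_order_commutator:
  "second_order v w (first_order b u X) = first_order b u (second_order v w X)
     + first_order (\<lambda>k. second_order v w (b k)) u X
     + (\<Sum>k\<in>UNIV. \<Sum>j\<in>UNIV. pd (w j) (b k) * pd (v j) (pd (u k) X))
     + (\<Sum>k\<in>UNIV. \<Sum>j\<in>UNIV. pd (v j) (b k) * pd (w j) (pd (u k) X))"
proof -
  define A1 where "A1 = (\<Sum>j\<in>UNIV. \<Sum>k\<in>UNIV. pd (v j) (pd (w j) (b k)) * pd (u k) X)"
  define A2 where "A2 = (\<Sum>j\<in>UNIV. \<Sum>k\<in>UNIV. pd (w j) (b k) * pd (v j) (pd (u k) X))"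
  define A3 where "A3 = (\<Sum>j\<in>UNIV. \<Sum>k\<in>UNIV. pd (v j) (b k) * pd (w j) (pd (u k) X))"
  define A4 where "A4 = (\<Sum>j\<in>UNIV. \<Sum>k\<in>UNIV. b k * pd (v j) (pd (w j) (pd (u k) X)))"
  have "second_order v w (first_order b u X) = A1 + A2 + A3 + A4"
    unfolding A1_def A2_def A3_def A4_def second_order_def first_order_def
    by (simp add: pd_sum pd_mult pd_add sum.distrib add.assoc)
  moreover have "first_order b u (second_order v w X) = A4"
    unfolding A4_def second_order_def first_order_def
    by (simp add: pd_sum sum_distrib_left) (subst sum.swap, simp add: pd_commute)
  moreover have "first_order (\<lambda>k. second_order v w (b k)) u X = A1"
    unfolding A1_def second_order_def first_order_def sum_distrib_right by (rule sum.swap)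
  moreover have "A2 = (\<Sum>k\<in>UNIV. \<Sum>j\<in>UNIV. pd (w j) (b k) * pd (v j) (pd (u k) X))"
    unfolding A2_def by (rule sum.swap)
  moreover have "A3 = (\<Sum>k\<in>UNIV. \<Sum>j\<in>UNIV. pd (v j) (b k) * pd (w j) (pd (u k) X))"
    unfolding A3_def by (rule sum.swap)
  ultimately show ?thesis by (simp add: algebra_simps)
qed

abbreviation euler :: "('n::finite \<Rightarrow> 'n + 'n) \<Rightarrow> 'n mpoly \<Rightarrow> 'n mpoly" where
  "euler s \<equiv> first_order (\<lambda>j. var (s j)) s"

abbreviation Nx :: "'n::finite mpoly \<Rightarrow> 'n mpoly" where "Nx \<equiv> euler Inl"
abbreviation Nu :: "'n::finite mpoly \<Rightarrow> 'n mpoly" where "Nu \<equiv> euler Inr"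
abbreviation Eop :: "'n::finite mpoly \<Rightarrow> 'n mpoly" where "Eop \<equiv> first_order (\<lambda>j. var (Inr j)) Inl"
abbreviation Fop :: "'n::finite mpoly \<Rightarrow> 'n mpoly" where "Fop \<equiv> first_order (\<lambda>j. var (Inl j)) Inr"
abbreviation Lx :: "'n::finite mpoly \<Rightarrow> 'n mpoly" where "Lx \<equiv> second_order Inl Inl"
abbreviation Lu :: "'n::finite mpoly \<Rightarrow> 'n mpoly" where "Lu \<equiv> second_order Inr Inr"
abbreviation Dop :: "'n::finite mpoly \<Rightarrow> 'n mpoly" where "Dop \<equiv> second_order Inr Inl"

lemma Xdu_eq: "Xdu = Fop" and Dux_eq: "Dux = Dop" and Lap_x_eq: "Lap_x = Lx" and Lap_u_eq: "Lap_u = Lu"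
  by (simp_all add: fun_eq_iff Xdu_def Dux_def Lap_x_def Lap_u_def first_order_def second_order_def Xv_var)

lemma first_order_var [simp]:
  "first_order a Inl (var (Inl k)) = a k" "first_order a Inr (var (Inl k)) = 0"
  "first_order a Inr (var (Inr k)) = a k" "first_order a Inl (var (Inr k)) = 0"
  by (simp_all add: first_order_def second_order_def)

lemma pd_ux [simp]: "pd (Inl j) ux = var (Inr j)" "pd (Inr j) ux = var (Inl j)"
  by (simp_all add: ux_def Xv_var Uv_var pd_sum pd_mult)

lemma pd_normx2 [simp]: "pd (Inl j) normx2 = 2 * var (Inl j)" "pd (Inr j) normx2 = 0"
  by (simp_all add: normx2_def Xv_var pd_sum pd_mult power2_eq_square flip: sum_distrib_left)

lemma pd_normu2 [simp]: "pd (Inr j) normu2 = 2 * var (Inr j)" "pd (Inl j) normu2 = 0"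
  by (simp_all add: normu2_def Uv_var pd_sum pd_mult power2_eq_square flip: sum_distrib_left)

abbreviation dim :: "'n::finite mpoly" where "dim \<equiv> of_nat (card (UNIV :: 'n set))"

lemma first_order_invariants [simp]:
  "Nx ux = ux" "Nu ux = ux" "Eop ux = normu2" "Fop ux = normx2"
  "Nx normx2 = 2 * normx2" "Nu normx2 = 0" "Eop normx2 = 2 * ux" "Fop normx2 = 0"
  "Nx normu2 = 0" "Nu normu2 = 2 * normu2" "Eop normu2 = 0" "Fop normu2 = 2 * ux"
  unfolding first_order_def pd_ux pd_normx2 pd_normu2
  by (simp_all add: ux_def normx2_def normu2_def Xv_var Uv_var power2_eq_square mult.commute
      mult.left_commute sum_distrib_left)

lemma second_order_invariants [simp]:
  "Lx ux = 0" "Lu ux = 0" "Dop ux = dim"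
  "Lx normx2 = 2 * dim" "Lu normx2 = 0" "Dop normx2 = 0"
  "Lx normu2 = 0" "Lu normu2 = 2 * dim" "Dop normu2 = 0"
  unfolding second_order_def pd_ux pd_normx2 pd_normu2
  by (simp_all add: pd_mult flip: sum_distrib_left)

lemma Fop_Eop: "Fop (Eop X) = Eop (Fop X) + Nx X - Nu X"
  using first_order_commutator[of "\<lambda>j. var (Inl j)" Inr "\<lambda>j. var (Inr j)" Inl X] by simp
lemma Nx_Eop: "Nx (Eop X) = Eop (Nx X) - Eop X"
  using first_order_commutator[of "\<lambda>j. var (Inl j)" Inl "\<lambda>j. var (Inr j)" Inl X] by simp
lemma Nx_Fop: "Nx (Fop X) = Fop (Nx X) + Fop X"
  using first_order_commutator[of "\<lambda>j. var (Inl j)" Inl "\<lambda>j. var (Inl j)" Inr X] by simp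
lemma Nu_Eop: "Nu (Eop X) = Eop (Nu X) + Eop X"
  using first_order_commutator[of "\<lambda>j. var (Inr j)" Inr "\<lambda>j. var (Inr j)" Inl X] by simp
lemma Nu_Fop: "Nu (Fop X) = Fop (Nu X) - Fop X"
  using first_order_commutator[of "\<lambda>j. var (Inr j)" Inr "\<lambda>j. var (Inl j)" Inr X] by simp
lemma Nu_Nx: "Nu (Nx X) = Nx (Nu X)"
  using first_order_commutator[of "\<lambda>j. var (Inr j)" Inr "\<lambda>j. var (Inl j)" Inl X] by simp

lemma Dop_Eop: "Dop (Eop X) = Eop (Dop X) + Lx X"
  using second_order_first_order_commutator[of Inr Inl "\<lambda>j. var (Inr j)" Inl X] by (simp add: second_order_def)
lemma Dop_Fop: "Dop (Fop X) = Fop (Dop X) + Lu X"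
  using second_order_first_order_commutator[of Inr Inl "\<lambda>j. var (Inl j)" Inr X]
  by (simp add: second_order_def pd_commute)
lemma Lx_Eop: "Lx (Eop X) = Eop (Lx X)"
  using second_order_first_order_commutator[of Inl Inl "\<lambda>j. var (Inr j)" Inl X] by (simp add: second_order_def)
lemma Lx_Fop: "Lx (Fop X) = Fop (Lx X) + 2 * Dop X"
  using second_order_first_order_commutator[of Inl Inl "\<lambda>j. var (Inl j)" Inr X]
  by (simp add: second_order_def pd_commute)
lemma Lu_Eop: "Lu (Eop X) = Eop (Lu X) + 2 * Dop X"
  using second_order_first_order_commutator[of Inr Inr "\<lambda>j. var (Inr j)" Inl X] by (simp add: second_order_def)
lemma Lu_Fop: "Lu (Fop X) = Fop (Lu X)"
  using second_order_first_order_commutator[of Inr Inr "\<lambda>j. var (Inl j)" Inr X] by (simp add: second_order_def)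
lemma Nx_Dop: "Nx (Dop X) = Dop (Nx X) - Dop X"
  using second_order_first_order_commutator[of Inr Inl "\<lambda>j. var (Inl j)" Inl X] by (simp add: second_order_def)
lemma Nu_Dop: "Nu (Dop X) = Dop (Nu X) - Dop X"
  using second_order_first_order_commutator[of Inr Inl "\<lambda>j. var (Inr j)" Inr X]
  by (simp add: second_order_def pd_commute)
lemma Nx_Lx: "Nx (Lx X) = Lx (Nx X) - 2 * Lx X"
  using second_order_first_order_commutator[of Inl Inl "\<lambda>j. var (Inl j)" Inl X] by (simp add: second_order_def)
lemma Nx_Lu: "Nx (Lu X) = Lu (Nx X)"
  using second_order_first_order_commutator[of Inr Inr "\<lambda>j. var (Inl j)" Inl X] by (simp add: second_order_def)
lemma Nu_Lx: "Nu (Lx X) = Lx (Nu X)"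
  using second_order_first_order_commutator[of Inl Inl "\<lambda>j. var (Inr j)" Inr X] by (simp add: second_order_def)
lemma Nu_Lu: "Nu (Lu X) = Lu (Nu X) - 2 * Lu X"
  using second_order_first_order_commutator[of Inr Inr "\<lambda>j. var (Inr j)" Inr X] by (simp add: second_order_def)

lemmas commutation_rules = Fop_Eop Nx_Eop Nx_Fop Nu_Eop Nu_Fop Nu_Nx Dop_Eop Dop_Fop Lx_Eop Lx_Fop
  Lu_Eop Lu_Fop Nx_Dop Nu_Dop Nx_Lx Nx_Lu Nu_Lx Nu_Lu
  second_order_commute[of Inl Inl Inr Inl] second_order_commute[of Inr Inr Inr Inl]
  second_order_commute[of Inr Inr Inl Inl]

text \<open>With \<open>L\<^sub>i\<^sub>j = x\<^sub>i\<partial>\<^sub>x\<^sub>j - x\<^sub>j\<partial>\<^sub>x\<^sub>i + u\<^sub>i\<partial>\<^sub>u\<^sub>j - u\<^sub>j\<partial>\<^sub>u\<^sub>i\<close>, this is \<open>\<Sum>\<^sub>i\<^sub><\<^sub>j L\<^sub>i\<^sub>j\<^sup>2\<close>, the Casimir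
  operator of the diagonal action of \<open>so(m)\<close>.\<close>
definition casimir :: "'n::finite mpoly \<Rightarrow> 'n mpoly" where
  "casimir X = normx2 * Lx X + normu2 * Lu X + 2 * (ux * Dop X) - Fop (Eop X) - Eop (Fop X)
     - Nx (Nx X) - Nu (Nu X) - (dim - 3) * (Nx X + Nu X)"

lemma casimir_add: "casimir (X + Y) = casimir X + casimir Y"
  and casimir_diff: "casimir (X - Y) = casimir X - casimir Y"
  and casimir_const_mult: "casimir (const c * X) = const c * casimir X"
  unfolding casimir_def by (simp_all add: algebra_simps)

lemma casimir_ux_mult: "casimir (ux * X) = ux * casimir X"
  and casimir_normx2_mult: "casimir (normx2 * X) = normx2 * casimir X"
  and casimir_normu2_mult: "casimir (normu2 * X) = normu2 * casimir X"
  and casimir_Eop: "casimir (Eop X) = Eop (casimir X)"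
  and casimir_Fop: "casimir (Fop X) = Fop (casimir X)"
  and casimir_Dop: "casimir (Dop X) = Dop (casimir X)"
  unfolding casimir_def by (simp_all add: commutation_rules mult.assoc pd_diff) (simp_all add: algebra_simps)

section \<open>Bihomogeneity and uniqueness of the Fischer decomposition\<close>

lemma lookup_const_mult: "Poly_Mapping.lookup (const c * X) \<beta> = c * Poly_Mapping.lookup X \<beta>"
  by (simp add: const_def map.rep_eq when_def flip: mult_map_scale_conv_mult)

lemma lookup_of_nat_mult: "Poly_Mapping.lookup (of_nat n * (X::'n mpoly)) \<beta> = of_nat n * Poly_Mapping.lookup X \<beta>"
  by (metis const_def lookup_const_mult single_of_nat)

lemma of_nat_mult_mpoly_eq_0_iff: "of_nat n * (X::'n mpoly) = 0 \<longleftrightarrow> n = 0 \<or> X = 0"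
  by (auto simp: poly_mapping_eq_iff fun_eq_iff lookup_of_nat_mult)

lemma const_mult_eq_0_iff: "const c * X = 0 \<longleftrightarrow> c = 0 \<or> X = 0"
  by (auto simp: poly_mapping_eq_iff fun_eq_iff lookup_const_mult)

lemma const_mult_cancel_left:
  assumes "c \<noteq> 0" and "const c * X = Y"
  shows "X = const (1 / c) * Y"
proof -
  have "const (1 / c) * const c = (1 :: 'a mpoly)"
    using assms(1) by (simp add: const_1 flip: const_mult)
  then show ?thesis
    by (simp add: assms(2)[symmetric] mult.assoc[symmetric])
qed

lemma second_order_const_mult: "second_order v w (const c * X) = const c * second_order v w X"
  by simp

lemma lookup_euler:
  "Poly_Mapping.lookup (euler s X) \<beta>
     = of_nat (\<Sum>j\<in>UNIV. Poly_Mapping.lookup \<beta> (s j)) * Poly_Mapping.lookup X \<beta>"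
proof -
  have monomial: "euler s (Poly_Mapping.single \<alpha> c)
      = Poly_Mapping.single \<alpha> (of_nat (\<Sum>j\<in>UNIV. Poly_Mapping.lookup \<alpha> (s j)) * c)" for \<alpha> c
  proof -
    have "var (s j) * pd (s j) (Poly_Mapping.single \<alpha> c)
        = Poly_Mapping.single \<alpha> (of_nat (Poly_Mapping.lookup \<alpha> (s j)) * c)" for j
    proof (cases "Poly_Mapping.lookup \<alpha> (s j) = 0")
      case False
      then have "unit_exp (s j) + (\<alpha> - unit_exp (s j)) = \<alpha>"
        by (auto intro!: poly_mapping_eqI simp: lookup_add lookup_minus lookup_single when_def)
      then show ?thesis by (simp add: var_def pd_single mult_single)
    qed (simp add: pd_single)
    moreover have "(\<Sum>j\<in>UNIV. Poly_Mapping.single \<alpha> (f j)) = Poly_Mapping.single \<alpha> (sum f UNIV)" for f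
      by (rule poly_mapping_eqI) (simp add: lookup_sum lookup_single when_def)
    ultimately show ?thesis
      by (simp add: first_order_def sum_distrib_right)
  qed
  show ?thesis
    by (subst mpoly_monomial_sum)
       (simp add: first_order_sum monomial lookup_sum lookup_single when_def in_keys_iff)
qed

lemma lookup_Nx: "Poly_Mapping.lookup (Nx X) \<beta> = of_nat (degx \<beta>) * Poly_Mapping.lookup X \<beta>"
  and lookup_Nu: "Poly_Mapping.lookup (Nu X) \<beta> = of_nat (degu \<beta>) * Poly_Mapping.lookup X \<beta>"
  by (simp_all add: lookup_euler degx_def degu_def)

lemma bihom_iff: "bihom p q X \<longleftrightarrow> Nx X = of_nat p * X \<and> Nu X = of_nat q * X"
  by (auto simp: bihom_def poly_mapping_eq_iff fun_eq_iff in_keys_iff lookup_Nx lookup_Nu lookup_of_nat_mult)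

lemma pd_eq_0_if_not_in_keys:
  assumes "\<And>\<alpha>. \<alpha> \<in> Poly_Mapping.keys X \<Longrightarrow> Poly_Mapping.lookup \<alpha> v = 0"
  shows "pd v X = 0"
proof (rule poly_mapping_eqI)
  fix \<beta>
  have "\<beta> + unit_exp v \<notin> Poly_Mapping.keys X"
    using assms[of "\<beta> + unit_exp v"] by (auto simp: lookup_add)
  then show "Poly_Mapping.lookup (pd v X) \<beta> = Poly_Mapping.lookup 0 \<beta>"
    by (simp add: lookup_pd in_keys_iff)
qed

lemma bihom_0_x_ops: "bihom 0 q X \<Longrightarrow> Eop X = 0 \<and> Dop X = 0"
  and bihom_0_u_ops: "bihom p 0 X \<Longrightarrow> Fop X = 0 \<and> Dop X = 0"
proof -
  assume "bihom 0 q X"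
  then have "pd (Inl j) X = 0" for j
    by (intro pd_eq_0_if_not_in_keys) (auto simp: bihom_def degx_def)
  then show "Eop X = 0 \<and> Dop X = 0"
    by (simp add: first_order_def second_order_def)
next
  assume "bihom p 0 X"
  then have "pd (Inr j) X = 0" for j
    by (intro pd_eq_0_if_not_in_keys) (auto simp: bihom_def degu_def)
  then show "Fop X = 0 \<and> Dop X = 0"
    by (simp add: first_order_def second_order_def pd_commute[of "Inr _"])
qed

definition sq_norm :: "('n::finite \<Rightarrow> 'n + 'n) \<Rightarrow> 'n mpoly" where
  "sq_norm s = (\<Sum>j\<in>UNIV. var (s j) ^ 2)"

lemma normx2_sq_norm: "normx2 = sq_norm Inl" and normu2_sq_norm: "normu2 = sq_norm Inr"
  by (simp_all add: normx2_def normu2_def sq_norm_def Xv_var Uv_var)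

lemma pd_sq_norm: "inj s \<Longrightarrow> pd (s j) (sq_norm s) = 2 * var (s j)"
  by (simp add: sq_norm_def pd_sum pd_mult power2_eq_square inj_eq flip: sum_distrib_left)

lemma euler_sq_norm_power_mult:
  assumes "inj s"
  shows "euler s (sq_norm s ^ n * G) = of_nat (2 * n) * (sq_norm s ^ n * G) + sq_norm s ^ n * euler s G"
proof -
  have "euler s (sq_norm s) = 2 * sq_norm s"
    by (simp add: first_order_def pd_sq_norm[OF assms])
       (simp add: sq_norm_def power2_eq_square sum_distrib_left mult.left_commute)
  then have "euler s (sq_norm s ^ n) = of_nat (2 * n) * sq_norm s ^ n"
    by (induction n) (simp_all add: algebra_simps)
  then show ?thesis
    by (simp add: algebra_simps)
qed

lemma lap_sq_norm_mult:
  assumes "inj s"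
  shows "second_order s s (sq_norm s * Y) = sq_norm s * second_order s s Y + 4 * euler s Y + 2 * dim * Y"
proof -
  have "second_order s s (sq_norm s) = 2 * dim"
    by (simp add: second_order_def pd_sq_norm[OF assms] pd_mult flip: sum_distrib_left)
  then show ?thesis
    by (simp add: pd_sq_norm[OF assms] mult.assoc)
qed

lemma lap_sq_norm_power_mult:
  fixes G :: "'n::finite mpoly"
  assumes "inj s" "second_order s s G = 0" "euler s G = of_nat d * G"
  shows "second_order s s (sq_norm s ^ Suc n * G)
    = of_nat (2 * Suc n * (card (UNIV :: 'n set) + 2 * d + 2 * n)) * (sq_norm s ^ n * G)"
proof (induction n)
  case 0
  then show ?case
    using assms by (simp add: lap_sq_norm_mult del: second_order_mult) (simp add: algebra_simps)
next
  case (Suc n)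
  have "euler s (sq_norm s ^ Suc n * G) = of_nat (2 * Suc n + d) * (sq_norm s ^ Suc n * G)"
    by (simp only: euler_sq_norm_power_mult[OF assms(1)] assms(3)) (simp add: algebra_simps)
  then show ?case
    using Suc by (simp only: power_Suc mult.assoc lap_sq_norm_mult[OF assms(1)]) (simp add: algebra_simps)
qed

text \<open>The Laplacian maps \<open>sq_norm s ^ (a+1) * G (a+1)\<close> to a positive multiple of \<open>sq_norm s ^ a * G (a+1)\<close>,
  so it shifts the expansion down by one; induct on \<open>A\<close>.\<close>
lemma sq_norm_expansion_eq_0:
  fixes G :: "nat \<Rightarrow> 'n::finite mpoly"
  assumes "inj s"
    and "\<And>a. a \<le> A \<Longrightarrow> second_order s s (G a) = 0 \<and> euler s (G a) = of_nat (d a) * G a"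
    and "(\<Sum>a\<le>A. sq_norm s ^ a * G a) = 0" and "a \<le> A"
  shows "G a = 0"
  using assms(2-)
proof (induction A arbitrary: G d a)
  case 0
  then show ?case by simp
next
  case (Suc A)
  define c where "c a = 2 * Suc a * (card (UNIV :: 'n set) + 2 * d (Suc a) + 2 * a)" for a
  have split: "(\<Sum>a\<le>Suc A. sq_norm s ^ a * G a) = G 0 + (\<Sum>a\<le>A. sq_norm s ^ Suc a * G (Suc a))"
    by (simp only: sum.atMost_Suc_shift power_0 mult_1_left)
  have "second_order s s (sq_norm s ^ Suc a * G (Suc a)) = sq_norm s ^ a * (of_nat (c a) * G (Suc a))"
    if "a \<le> A" for a
    using lap_sq_norm_power_mult[OF assms(1)] Suc.prems(1)[of "Suc a"] that
    by (simp add: c_def mult.left_commute)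
  moreover have "second_order s s (G 0) = 0"
    using Suc.prems(1) by simp
  ultimately have "second_order s s (\<Sum>a\<le>Suc A. sq_norm s ^ a * G a)
      = (\<Sum>a\<le>A. sq_norm s ^ a * (of_nat (c a) * G (Suc a)))"
    unfolding split by (simp add: second_order_sum del: second_order_mult)
  then have sum_eq_0: "(\<Sum>a\<le>A. sq_norm s ^ a * (of_nat (c a) * G (Suc a))) = 0"
    by (simp only: Suc.prems(2) second_order_zero)
  have eigen: "second_order s s (of_nat (c a) * G (Suc a)) = 0 \<and>
      euler s (of_nat (c a) * G (Suc a)) = of_nat (d (Suc a)) * (of_nat (c a) * G (Suc a))" if "a \<le> A" for a
    using Suc.prems(1)[of "Suc a"] that by (simp add: mult.left_commute)
  have shifted: "G (Suc a) = 0" if "a \<le> A" for a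
  proof -
    have "of_nat (c a) * G (Suc a) = 0"
      using Suc.IH[of "\<lambda>a. of_nat (c a) * G (Suc a)" "\<lambda>a. d (Suc a)", OF eigen sum_eq_0 that] .
    moreover have "c a \<noteq> 0"
      by (simp add: c_def)
    ultimately show ?thesis
      by (simp only: of_nat_mult_mpoly_eq_0_iff) simp
  qed
  then have "G 0 = 0"
    using Suc.prems(2)[unfolded split] by simp
  then show ?case
    using shifted Suc.prems(3) by (cases a) simp_all
qed

lemma first_order_mult_if_pd_eq_0:
  "(\<And>j. pd (v j) P = 0) \<Longrightarrow> first_order a v (P * X) = P * first_order a v X"
  by (simp add: first_order_def pd_mult sum_distrib_left mult.left_commute)

lemma second_order_mult_if_pd_eq_0:
  "(\<And>j. pd (v j) P = 0) \<Longrightarrow> (\<And>j. pd (w j) P = 0) \<Longrightarrow> second_order v w (P * X) = P * second_order v w X"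
  by (simp add: second_order_def pd_mult sum_distrib_left)

lemma harm2_iff: "harm2 X \<longleftrightarrow> Lx X = 0 \<and> Lu X = 0"
  by (simp add: harm2_def Lap_x_eq Lap_u_eq)

lemma fischer_decomposition_unique:
  fixes K :: "nat \<Rightarrow> nat \<Rightarrow> 'n::finite mpoly"
  assumes K: "\<forall>a b. 2*a \<le> p \<and> 2*b \<le> q \<longrightarrow> bihom (p - 2*a) (q - 2*b) (K a b) \<and> harm2 (K a b)"
    and sum_eq_0: "(\<Sum>a\<le>p div 2. \<Sum>b\<le>q div 2. normx2 ^ a * normu2 ^ b * K a b) = 0"
  shows "K 0 0 = 0"
proof -
  have Kab: "bihom (p - 2*a) (q - 2*b) (K a b) \<and> harm2 (K a b)" if "a \<le> p div 2" "b \<le> q div 2" for a b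
  proof -
    have "2*a \<le> p" "2*b \<le> q"
      using that by presburger+
    then show ?thesis
      using K by blast
  qed
  define G where "G a = (\<Sum>b\<le>q div 2. normu2 ^ b * K a b)" for a
  have normu2_power: "pd (Inl j) (normu2 ^ b) = 0" for j :: 'n and b
    by (simp add: pd_power_eq_0)
  have "Lx (normu2 ^ b * X) = normu2 ^ b * Lx X" for b and X :: "'n mpoly"
    by (simp only: second_order_mult_if_pd_eq_0 normu2_power)
  moreover have "Nx (normu2 ^ b * X) = normu2 ^ b * Nx X" for b and X :: "'n mpoly"
    by (simp only: first_order_mult_if_pd_eq_0 normu2_power)
  ultimately have "Lx (G a) = 0 \<and> Nx (G a) = of_nat (p - 2*a) * G a" if "a \<le> p div 2" for a
    using Kab that unfolding G_def
    by (auto simp: second_order_sum first_order_sum harm2_iff bihom_iff sum_distrib_left mult.left_commute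
        simp del: second_order_mult first_order_mult of_nat_diff intro!: sum.neutral sum.cong)
  moreover have "(\<Sum>a\<le>p div 2. sq_norm Inl ^ a * G a) = 0"
    using sum_eq_0 by (simp add: G_def normx2_sq_norm sum_distrib_left mult.assoc)
  ultimately have "G 0 = 0"
    by (intro sq_norm_expansion_eq_0[where d = "\<lambda>a. p - 2*a"]) auto
  then have "(\<Sum>b\<le>q div 2. sq_norm Inr ^ b * K 0 b) = 0"
    by (simp add: G_def normu2_sq_norm)
  moreover have "Lu (K 0 b) = 0 \<and> Nu (K 0 b) = of_nat (q - 2*b) * K 0 b" if "b \<le> q div 2" for b
    using Kab that by (auto simp: harm2_iff bihom_iff)
  ultimately show ?thesis
    by (intro sq_norm_expansion_eq_0[where d = "\<lambda>b. q - 2*b" and s = Inr]) auto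
qed

lemma bihom_zero [simp]: "bihom p q 0"
  by (simp add: bihom_def)

lemma bihom_diff: "bihom p q X \<Longrightarrow> bihom p q Y \<Longrightarrow> bihom p q (X - Y)"
  and bihom_const_mult: "bihom p q X \<Longrightarrow> bihom p q (const c * X)"
  by (simp_all add: bihom_iff algebra_simps)

lemma pi_hom_eqI:
  fixes Hf :: "nat \<Rightarrow> nat \<Rightarrow> 'n::finite mpoly"
  assumes Hf: "\<forall>a b. 2*a \<le> p \<and> 2*b \<le> q \<longrightarrow> bihom (p - 2*a) (q - 2*b) (Hf a b) \<and> harm2 (Hf a b)"
    and P: "P = (\<Sum>a\<le>p div 2. \<Sum>b\<le>q div 2. normx2 ^ a * normu2 ^ b * Hf a b)"
  shows "pi_hom p q P = Hf 0 0"
  unfolding pi_hom_def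
proof (rule the_equality)
  show "\<exists>Hf'. (\<forall>a b. 2*a \<le> p \<and> 2*b \<le> q \<longrightarrow> bihom (p - 2*a) (q - 2*b) (Hf' a b) \<and> harm2 (Hf' a b)) \<and>
      P = (\<Sum>a\<le>p div 2. \<Sum>b\<le>q div 2. normx2 ^ a * normu2 ^ b * Hf' a b) \<and> Hf 0 0 = Hf' 0 0"
    using Hf P by blast
next
  fix H
  assume "\<exists>Hf'. (\<forall>a b. 2*a \<le> p \<and> 2*b \<le> q \<longrightarrow> bihom (p - 2*a) (q - 2*b) (Hf' a b) \<and> harm2 (Hf' a b)) \<and>
      P = (\<Sum>a\<le>p div 2. \<Sum>b\<le>q div 2. normx2 ^ a * normu2 ^ b * Hf' a b) \<and> H = Hf' 0 0"
  then obtain Hf' where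
    Hf': "\<forall>a b. 2*a \<le> p \<and> 2*b \<le> q \<longrightarrow> bihom (p - 2*a) (q - 2*b) (Hf' a b) \<and> harm2 (Hf' a b)"
    and P': "P = (\<Sum>a\<le>p div 2. \<Sum>b\<le>q div 2. normx2 ^ a * normu2 ^ b * Hf' a b)" and H: "H = Hf' 0 0"
    by blast
  have "(\<lambda>a b. Hf' a b - Hf a b) 0 0 = 0"
  proof (rule fischer_decomposition_unique[where K = "\<lambda>a b. Hf' a b - Hf a b"])
    show "\<forall>a b. 2*a \<le> p \<and> 2*b \<le> q \<longrightarrow> bihom (p - 2*a) (q - 2*b) (Hf' a b - Hf a b) \<and> harm2 (Hf' a b - Hf a b)"
      using Hf Hf' by (auto intro: bihom_diff simp: harm2_iff)
    show "(\<Sum>a\<le>p div 2. \<Sum>b\<le>q div 2. normx2 ^ a * normu2 ^ b * (Hf' a b - Hf a b)) = 0"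
      using P P' by (simp add: right_diff_distrib sum_subtractf)
  qed
  then show "H = Hf 0 0"
    using H by simp
qed

lemma pi_s_eq_pi_hom:
  assumes "bihom p q (P::'n::finite mpoly)"
  shows "pi_s P = pi_hom p q P"
proof (cases "P = 0")
  case True
  have "pi_hom p q (0::'n mpoly) = (\<lambda>a b. 0) 0 0"
    by (rule pi_hom_eqI) (simp_all add: harm2_iff)
  with True show ?thesis
    by (simp add: pi_s_def)
next
  case False
  then obtain \<alpha> where "\<alpha> \<in> Poly_Mapping.keys P"
    by fastforce
  then have "(\<lambda>\<alpha>. (degx \<alpha>, degu \<alpha>)) ` Poly_Mapping.keys P = {(p, q)}"
    using assms unfolding bihom_def by (auto intro!: image_eqI[of _ _ \<alpha>])
  moreover have "{\<alpha> \<in> Poly_Mapping.keys P. degx \<alpha> = p \<and> degu \<alpha> = q} = Poly_Mapping.keys P"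
    using assms by (auto simp: bihom_def)
  then have "bipart p q P = P"
    by (simp add: bipart_def flip: mpoly_monomial_sum)
  ultimately show ?thesis
    by (simp add: pi_s_def)
qed

section \<open>The harmonic part of \<open>\<langle>u,x\<rangle>Q\<close>\<close>

definition alpha :: "nat \<Rightarrow> nat \<Rightarrow> complex" where
  "alpha m p = of_nat m + 2 * of_nat p - 2"

lemma alpha_neq_0: "2 < m \<Longrightarrow> alpha m p \<noteq> 0"
proof -
  assume "2 < m"
  then have "0 < Re (alpha m p)"
    by (simp add: alpha_def)
  then show ?thesis
    by auto
qed

definition ux_harm :: "nat \<Rightarrow> nat \<Rightarrow> 'n::finite mpoly \<Rightarrow> 'n mpoly" where
  "ux_harm p q Q = ux * Q - const (1 / alpha (card (UNIV :: 'n set)) p) * (normx2 * Eop Q)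
     - const (1 / alpha (card (UNIV :: 'n set)) q) * (normu2 * Fop Q)
     + const (1 / (alpha (card (UNIV :: 'n set)) p * alpha (card (UNIV :: 'n set)) q)) * (normx2 * (normu2 * Dop Q))"

definition ux_coeff_x :: "nat \<Rightarrow> nat \<Rightarrow> 'n::finite mpoly \<Rightarrow> 'n mpoly" where
  "ux_coeff_x p q Q = const (1 / alpha (card (UNIV :: 'n set)) p)
     * (Eop Q - const (1 / alpha (card (UNIV :: 'n set)) q) * (normu2 * Dop Q))"

definition ux_coeff_u :: "nat \<Rightarrow> nat \<Rightarrow> 'n::finite mpoly \<Rightarrow> 'n mpoly" where
  "ux_coeff_u p q Q = const (1 / alpha (card (UNIV :: 'n set)) q)
     * (Fop Q - const (1 / alpha (card (UNIV :: 'n set)) p) * (normx2 * Dop Q))"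

definition ux_coeff_xu :: "nat \<Rightarrow> nat \<Rightarrow> 'n::finite mpoly \<Rightarrow> 'n mpoly" where
  "ux_coeff_xu p q Q = const (1 / (alpha (card (UNIV :: 'n set)) p * alpha (card (UNIV :: 'n set)) q)) * Dop Q"

lemma const_alpha: "const (alpha (card (UNIV :: 'n set)) p) = (dim :: 'n::finite mpoly) + 2 * of_nat p - 2"
  by (simp add: alpha_def const_hom)

text \<open>Clearing the denominators \<open>\<alpha>\<close> turns the computations below into polynomial identities.\<close>
lemma ux_parts_scaled:
  fixes Q :: "'n::finite mpoly" and p q :: nat
  assumes "2 < card (UNIV :: 'n set)"
  defines "a \<equiv> alpha (card (UNIV :: 'n set)) p" and "b \<equiv> alpha (card (UNIV :: 'n set)) q"
  shows "const (a * b) * ux_harm p q Q = const a * const b * (ux * Q) - const b * (normx2 * Eop Q)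
      - const a * (normu2 * Fop Q) + normx2 * (normu2 * Dop Q)"
    and "const (a * b) * ux_coeff_x p q Q = const b * Eop Q - normu2 * Dop Q"
    and "const (a * b) * ux_coeff_u p q Q = const a * Fop Q - normx2 * Dop Q"
    and "const (a * b) * ux_coeff_xu p q Q = Dop Q"
proof -
  have coeffs: "const a * const b * const (1 / a) = const b" "const a * const b * const (1 / b) = const a"
    "const a * const b * const (1 / (a * b)) = (1 :: 'n mpoly)"
    "const b * const (1 / b) = (1 :: 'n mpoly)" "const a * const (1 / a) = (1 :: 'n mpoly)"
    using alpha_neq_0[OF assms(1)] by (simp_all add: a_def b_def const_1 flip: const_mult)
  show "const (a * b) * ux_harm p q Q = const a * const b * (ux * Q) - const b * (normx2 * Eop Q)
      - const a * (normu2 * Fop Q) + normx2 * (normu2 * Dop Q)"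
    unfolding ux_harm_def a_def[symmetric] b_def[symmetric] const_mult[of a b]
      right_diff_distrib distrib_left mult.assoc[symmetric] coeffs
    by simp
  show "const (a * b) * ux_coeff_x p q Q = const b * Eop Q - normu2 * Dop Q"
    "const (a * b) * ux_coeff_u p q Q = const a * Fop Q - normx2 * Dop Q"
    "const (a * b) * ux_coeff_xu p q Q = Dop Q"
    unfolding ux_coeff_x_def ux_coeff_u_def ux_coeff_xu_def a_def[symmetric] b_def[symmetric]
      const_mult[of a b] right_diff_distrib mult.assoc[symmetric] coeffs
    by (simp_all add: mult.commute[of "const a"] mult.assoc coeffs[unfolded mult.assoc])
qed

lemma ux_mult_decomposition:
  "ux * Q = ux_harm p q Q + normx2 * ux_coeff_x p q Q + normu2 * ux_coeff_u p q Q
     + normx2 * (normu2 * ux_coeff_xu p q Q)"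
  by (simp add: ux_harm_def ux_coeff_x_def ux_coeff_u_def ux_coeff_xu_def algebra_simps flip: const_mult)

lemma ux_harm_const_mult: "ux_harm p q (const c * X) = const c * ux_harm p q X"
  by (simp add: ux_harm_def algebra_simps)

lemma casimir_ux_harm: "casimir (ux_harm p q X) = ux_harm p q (casimir X)"
  unfolding ux_harm_def
  by (simp only: casimir_add casimir_diff casimir_const_mult mult.assoc casimir_ux_mult casimir_normx2_mult
      casimir_normu2_mult casimir_Eop casimir_Fop casimir_Dop)

lemma sum_atMost_eq_first_two:
  fixes g :: "nat \<Rightarrow> 'a::comm_monoid_add"
  assumes "\<And>a. 2 \<le> a \<Longrightarrow> g a = 0" and "A = 0 \<Longrightarrow> g 1 = 0"
  shows "sum g {..A} = g 0 + g 1"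
proof (cases "A = 0")
  case False
  then have "sum g {..A} = sum g {..1}"
    using assms(1) by (intro sum.mono_neutral_right) auto
  then show ?thesis
    by simp
qed (use assms(2) in simp)

lemma Suc_div_2_eq_0: "Suc n div 2 = 0 \<Longrightarrow> n = 0"
  by presburger

context
  fixes Q :: "'n::finite mpoly" and p q :: nat
  assumes Q_bihom: "bihom p q Q" and Q_harm: "harm2 Q"
begin

lemma bihom_harm2_eqs: "Lx Q = 0" "Lu Q = 0" "Nx Q = of_nat p * Q" "Nu Q = of_nat q * Q"
  using Q_bihom Q_harm by (simp_all add: bihom_iff harm2_iff)

lemma bihom_ux_harm: "bihom (Suc p) (Suc q) (ux_harm p q Q)"
  unfolding bihom_iff ux_harm_def using bihom_harm2_eqs by (simp add: commutation_rules) (simp add: algebra_simps)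

lemma harm2_ux_parts:
  assumes "2 < card (UNIV :: 'n set)"
  shows "harm2 (ux_harm p q Q)" "harm2 (ux_coeff_x p q Q)" "harm2 (ux_coeff_u p q Q)"
    "harm2 (ux_coeff_xu p q Q)"
proof -
  let ?c = "alpha (card (UNIV :: 'n set)) p * alpha (card (UNIV :: 'n set)) q"
  have "const ?c * Lx (ux_harm p q Q) = 0" "const ?c * Lu (ux_harm p q Q) = 0"
    "const ?c * Lx (ux_coeff_x p q Q) = 0" "const ?c * Lu (ux_coeff_x p q Q) = 0"
    "const ?c * Lx (ux_coeff_u p q Q) = 0" "const ?c * Lu (ux_coeff_u p q Q) = 0"
    "const ?c * Lx (ux_coeff_xu p q Q) = 0" "const ?c * Lu (ux_coeff_xu p q Q) = 0"
    unfolding second_order_const_mult[symmetric] ux_parts_scaled[OF assms]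
    using bihom_harm2_eqs by (simp_all add: commutation_rules pd_mult) (simp_all add: const_alpha algebra_simps)
  moreover have "?c \<noteq> 0"
    using alpha_neq_0[OF assms] by simp
  ultimately show "harm2 (ux_harm p q Q)" "harm2 (ux_coeff_x p q Q)" "harm2 (ux_coeff_u p q Q)"
    "harm2 (ux_coeff_xu p q Q)"
    by (simp_all add: harm2_iff const_mult_eq_0_iff)
qed

lemma bihom_Dop: "bihom (p - 1) (q - 1) (Dop Q)"
proof (cases "p = 0 \<or> q = 0")
  case True
  then show ?thesis
    using bihom_0_x_ops[of q Q] bihom_0_u_ops[of p Q] Q_bihom by auto
next
  case False
  then show ?thesis
    unfolding bihom_iff using bihom_harm2_eqs
    by (simp add: commutation_rules of_nat_diff) (simp add: algebra_simps)
qed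

lemma bihom_ux_coeffs:
  shows "bihom (p - 1) (Suc q) (ux_coeff_x p q Q)" "bihom (Suc p) (q - 1) (ux_coeff_u p q Q)"
    "bihom (p - 1) (q - 1) (ux_coeff_xu p q Q)"
proof -
  show "bihom (p - 1) (Suc q) (ux_coeff_x p q Q)"
  proof (cases p)
    case 0
    then show ?thesis
      using bihom_0_x_ops[of q Q] Q_bihom by (simp add: ux_coeff_x_def)
  next
    case (Suc p')
    then show ?thesis
      unfolding ux_coeff_x_def bihom_iff using bihom_harm2_eqs
      by (simp add: commutation_rules) (simp add: pd_add algebra_simps)
  qed
  show "bihom (Suc p) (q - 1) (ux_coeff_u p q Q)"
  proof (cases q)
    case 0
    then show ?thesis
      using bihom_0_u_ops[of p Q] Q_bihom by (simp add: ux_coeff_u_def)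
  next
    case (Suc q')
    then show ?thesis
      unfolding ux_coeff_u_def bihom_iff using bihom_harm2_eqs
      by (simp add: commutation_rules) (simp add: pd_add algebra_simps)
  qed
  show "bihom (p - 1) (q - 1) (ux_coeff_xu p q Q)"
    unfolding ux_coeff_xu_def by (rule bihom_const_mult[OF bihom_Dop])
qed

lemma ux_coeffs_vanish:
  shows "p = 0 \<Longrightarrow> ux_coeff_x p q Q = 0 \<and> ux_coeff_xu p q Q = 0"
    and "q = 0 \<Longrightarrow> ux_coeff_u p q Q = 0 \<and> ux_coeff_xu p q Q = 0"
  using Q_bihom bihom_0_x_ops[of q Q] bihom_0_u_ops[of p Q]
  by (auto simp: ux_coeff_x_def ux_coeff_u_def ux_coeff_xu_def)

lemma Cop_eq_ux_harm:
  assumes "2 < card (UNIV :: 'n set)"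
  shows "Cop Q = ux_harm p q Q"
proof -
  define Hf where "Hf a b = (if a = 0 \<and> b = 0 then ux_harm p q Q else if a = 1 \<and> b = 0 then ux_coeff_x p q Q
    else if a = 0 \<and> b = 1 then ux_coeff_u p q Q else if a = 1 \<and> b = 1 then ux_coeff_xu p q Q else 0)"
    for a b :: nat
  have parts: "bihom (Suc p - 2*a) (Suc q - 2*b) (Hf a b) \<and> harm2 (Hf a b)" for a b
    using bihom_ux_harm bihom_ux_coeffs harm2_ux_parts[OF assms]
    by (auto simp: Hf_def harm2_iff)
  have "(\<Sum>a\<le>Suc p div 2. \<Sum>b\<le>Suc q div 2. normx2 ^ a * normu2 ^ b * Hf a b)
      = (\<Sum>a\<le>Suc p div 2. normx2 ^ a * (Hf a 0 + normu2 * Hf a 1))"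
    using ux_coeffs_vanish(2)
    by (subst sum_atMost_eq_first_two) (auto simp: Hf_def algebra_simps dest: Suc_div_2_eq_0)
  also have "\<dots> = ux * Q"
    using ux_coeffs_vanish(1) ux_mult_decomposition[of Q p q]
    by (subst sum_atMost_eq_first_two) (auto simp: Hf_def algebra_simps dest: Suc_div_2_eq_0)
  finally have "pi_hom (Suc p) (Suc q) (ux * Q) = Hf 0 0"
    using parts by (intro pi_hom_eqI) auto
  moreover have "bihom (Suc p) (Suc q) (ux * Q)"
    using bihom_harm2_eqs by (simp add: bihom_iff algebra_simps)
  ultimately show ?thesis
    by (simp add: Cop_def pi_s_eq_pi_hom Hf_def)
qed

lemma Aop_eq_Dop: "Aop Q = Dop Q"
proof -
  define Hf where "Hf a b = (if a = 0 \<and> b = 0 then Dop Q else 0)" for a b :: nat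
  have "bihom (p - 1 - 2*a) (q - 1 - 2*b) (Hf a b) \<and> harm2 (Hf a b)" for a b
    using bihom_Dop bihom_harm2_eqs by (simp add: Hf_def harm2_iff commutation_rules)
  moreover have "(\<Sum>a\<le>(p - 1) div 2. \<Sum>b\<le>(q - 1) div 2. normx2 ^ a * normu2 ^ b * Hf a b) = Dop Q"
    by (subst sum_atMost_eq_first_two, simp_all add: Hf_def)+
  ultimately have "pi_hom (p - 1) (q - 1) (Dop Q) = Hf 0 0"
    by (intro pi_hom_eqI) auto
  then show ?thesis
    by (simp add: Aop_def Dux_eq pi_s_eq_pi_hom[OF bihom_Dop] Hf_def)
qed

end

section \<open>The recurrence for \<open>D C\<^sup>i H\<close>\<close>

definition kappa :: "nat \<Rightarrow> nat \<Rightarrow> nat \<Rightarrow> complex \<Rightarrow> complex" where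
  "kappa m p q lam = lam + of_nat p - of_nat q + of_nat p ^ 2 + of_nat q ^ 2 + (of_nat m - 3) * (of_nat p + of_nat q)"

definition sigma :: "nat \<Rightarrow> nat \<Rightarrow> nat \<Rightarrow> complex \<Rightarrow> complex" where
  "sigma m p q lam = of_nat m + of_nat p + of_nat q - 2 * (of_nat p - of_nat q) / alpha m p
     + (1 / alpha m p + 1 / alpha m q) * kappa m p q lam"

definition rho :: "nat \<Rightarrow> nat \<Rightarrow> nat \<Rightarrow> complex" where
  "rho m p q = (1 - 2 / alpha m p) * (1 - 2 / alpha m q)"

context
  fixes Q :: "'n::finite mpoly" and p q :: nat and lam :: complex
  assumes Q_bihom: "bihom p q Q" and Q_harm: "harm2 Q" and Q_casimir: "casimir Q = const lam * Q"
begin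

lemma Eop_Fop_casimir: "2 * Eop (Fop Q) = 2 * (ux * Dop Q) - const (kappa (card (UNIV :: 'n set)) p q lam) * Q"
  using Q_casimir bihom_harm2_eqs[OF Q_bihom Q_harm] unfolding casimir_def
  by (simp add: commutation_rules) (simp add: kappa_def const_hom algebra_simps power2_eq_square)

lemma Dop_ux_harm_scaled:
  assumes "2 < card (UNIV :: 'n set)"
  defines "a \<equiv> alpha (card (UNIV :: 'n set)) p" and "b \<equiv> alpha (card (UNIV :: 'n set)) q"
    and "k \<equiv> kappa (card (UNIV :: 'n set)) p q lam"
  shows "const (a * b) * Dop (ux_harm p q Q)
    = const (a * b * (of_nat (card (UNIV :: 'n set)) + of_nat p + of_nat q) - 2 * b * (of_nat p - of_nat q)
        + (a + b) * k) * Q + const ((a - 2) * (b - 2)) * ux_harm (p - 1) (q - 1) (Dop Q)"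
proof -
  have scaled: "const (a * b) * ux_harm p q Q = const a * const b * (ux * Q) - const b * (normx2 * Eop Q)
      - const a * (normu2 * Fop Q) + normx2 * (normu2 * Dop Q)"
    using ux_parts_scaled(1)[OF assms(1)] by (simp add: a_def b_def)
  have "const (a * b) * Dop (ux_harm p q Q) - (const (a * b * (of_nat (card (UNIV :: 'n set)) + of_nat p
        + of_nat q) - 2 * b * (of_nat p - of_nat q) + (a + b) * k) * Q
      + (const (a - 2) * const (b - 2) * (ux * Dop Q) - const (b - 2) * (normx2 * Eop (Dop Q))
      - const (a - 2) * (normu2 * Fop (Dop Q)) + normx2 * (normu2 * Dop (Dop Q))))
    = - const (a + b) * (2 * Eop (Fop Q) - 2 * (ux * Dop Q) + const k * Q)"
    unfolding second_order_const_mult[symmetric] scaled using bihom_harm2_eqs[OF Q_bihom Q_harm]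
    by (simp add: commutation_rules pd_mult) (simp add: const_hom algebra_simps)
  also have "\<dots> = 0"
    using Eop_Fop_casimir by (simp add: k_def)
  finally have expanded: "const (a * b) * Dop (ux_harm p q Q) = const (a * b * (of_nat (card (UNIV :: 'n set))
        + of_nat p + of_nat q) - 2 * b * (of_nat p - of_nat q) + (a + b) * k) * Q
      + (const (a - 2) * const (b - 2) * (ux * Dop Q) - const (b - 2) * (normx2 * Eop (Dop Q))
      - const (a - 2) * (normu2 * Fop (Dop Q)) + normx2 * (normu2 * Dop (Dop Q)))"
    by simp
  have tail: "const (a - 2) * const (b - 2) * (ux * Dop Q) - const (b - 2) * (normx2 * Eop (Dop Q))
      - const (a - 2) * (normu2 * Fop (Dop Q)) + normx2 * (normu2 * Dop (Dop Q))
    = const ((a - 2) * (b - 2)) * ux_harm (p - 1) (q - 1) (Dop Q)"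
  proof (cases "p = 0 \<or> q = 0")
    case True
    then have "Dop Q = 0"
      using Q_bihom bihom_0_x_ops[of q Q] bihom_0_u_ops[of p Q] by auto
    then show ?thesis
      by (simp add: ux_harm_def)
  next
    case False
    then have "alpha (card (UNIV :: 'n set)) (p - 1) = a - 2" "alpha (card (UNIV :: 'n set)) (q - 1) = b - 2"
      by (simp_all add: a_def b_def alpha_def of_nat_diff algebra_simps)
    then show ?thesis
      using ux_parts_scaled(1)[OF assms(1), of "p - 1" "q - 1" "Dop Q"] by simp
  qed
  show ?thesis
    unfolding expanded tail ..
qed

lemma Dop_ux_harm:
  assumes "2 < card (UNIV :: 'n set)"
  shows "Dop (ux_harm p q Q) = const (sigma (card (UNIV :: 'n set)) p q lam) * Q
    + const (rho (card (UNIV :: 'n set)) p q) * ux_harm (p - 1) (q - 1) (Dop Q)"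
proof -
  define a where "a = alpha (card (UNIV :: 'n set)) p"
  define b where "b = alpha (card (UNIV :: 'n set)) q"
  define k where "k = kappa (card (UNIV :: 'n set)) p q lam"
  have ab: "a \<noteq> 0" "b \<noteq> 0"
    using alpha_neq_0[OF assms] by (simp_all add: a_def b_def)
  have "Dop (ux_harm p q Q) = const (1 / (a * b)) * (const (a * b * (of_nat (card (UNIV :: 'n set)) + of_nat p
      + of_nat q) - 2 * b * (of_nat p - of_nat q) + (a + b) * k) * Q
      + const ((a - 2) * (b - 2)) * ux_harm (p - 1) (q - 1) (Dop Q))"
    using ab Dop_ux_harm_scaled[OF assms, folded a_def b_def k_def] by (intro const_mult_cancel_left) simp_all
  also have "\<dots> = const (1 / (a * b) * (a * b * (of_nat (card (UNIV :: 'n set)) + of_nat p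
      + of_nat q) - 2 * b * (of_nat p - of_nat q) + (a + b) * k)) * Q
      + const (1 / (a * b) * ((a - 2) * (b - 2))) * ux_harm (p - 1) (q - 1) (Dop Q)"
    unfolding distrib_left[of "const (1 / (a * b))"] mult.assoc[symmetric, of "const (1 / (a * b))"]
    by (simp only: const_mult)
  moreover have "1 / (a * b) * (a * b * (of_nat (card (UNIV :: 'n set)) + of_nat p + of_nat q)
      - 2 * b * (of_nat p - of_nat q) + (a + b) * k) = sigma (card (UNIV :: 'n set)) p q lam"
    "1 / (a * b) * ((a - 2) * (b - 2)) = rho (card (UNIV :: 'n set)) p q"
    using ab by (simp_all add: sigma_def rho_def a_def b_def k_def field_simps)
  ultimately show ?thesis
    by (simp only:)
qed

end

definition casimir_eigenvalue :: "nat \<Rightarrow> nat \<Rightarrow> nat \<Rightarrow> complex" where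
  "casimir_eigenvalue m k l = - (of_nat k - of_nat l) - of_nat k ^ 2 - of_nat l ^ 2 - (of_nat m - 3) * (of_nat k + of_nat l)"

lemma recurrence_identity:
  fixes a b S I :: complex
  assumes "a \<noteq> 0" "b \<noteq> 0" "a + b = 2 * S + 2 * I - 4"
  shows "(I + 1) * (a + 2) * (S - 2) / a
    = S + I - (a - b) / a + (1 / a + 1 / b) * (2 * I * (S - 3)) + I * (b - 2) * (S - 3) / b"
  using assms by (simp add: field_simps) algebra

lemma complex_of_real_cconst:
  "complex_of_real (cconst m i k l) = of_nat i * (of_nat k + of_nat m / 2 + of_nat i - 1)
     * (of_nat k + of_nat l + of_nat m + of_nat i - 3) / (of_nat k + of_nat m / 2 + of_nat i - 2)"
  by (simp add: cconst_def)

lemma cconst_Suc: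
  assumes "4 < m"
  shows "complex_of_real (cconst m (Suc i) k l)
    = sigma m (k + i) (l + i) (casimir_eigenvalue m k l) + rho m (k + i) (l + i) * complex_of_real (cconst m i k l)"
proof -
  define a where "a = alpha m (k + i)"
  define b where "b = alpha m (l + i)"
  define S :: complex where "S = of_nat (k + l + m + i)"
  define I :: complex where "I = of_nat i"
  have "0 < Re a" "0 < Re b" "0 < Re (a - 2)"
    using assms by (simp_all add: a_def b_def alpha_def)
  then have nz: "a \<noteq> 0" "b \<noteq> 0" "a - 2 \<noteq> 0"
    by auto
  have factors: "of_nat k + of_nat m / 2 + of_nat (Suc i) - 1 = (a + 2) / 2"
    "of_nat k + of_nat m / 2 + of_nat (Suc i) - 2 = a / 2"
    "of_nat k + of_nat m / 2 + of_nat i - 1 = a / 2"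
    "of_nat k + of_nat m / 2 + of_nat i - 2 = (a - 2) / 2"
    "of_nat k + of_nat l + of_nat m + of_nat (Suc i) - 3 = S - 2"
    "of_nat k + of_nat l + of_nat m + of_nat i - 3 = S - 3"
    by (simp_all add: a_def alpha_def S_def field_simps)
  have "complex_of_real (cconst m (Suc i) k l) = (I + 1) * (a + 2) * (S - 2) / a"
    using nz unfolding complex_of_real_cconst factors by (simp add: I_def field_simps)
  moreover have "rho m (k + i) (l + i) * complex_of_real (cconst m i k l) = I * (b - 2) * (S - 3) / b"
    using nz unfolding complex_of_real_cconst factors by (simp add: rho_def I_def flip: a_def b_def) (simp add: field_simps)
  moreover have "sigma m (k + i) (l + i) (casimir_eigenvalue m k l)
      = S + I - (a - b) / a + (1 / a + 1 / b) * (2 * I * (S - 3))"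
    by (simp add: sigma_def kappa_def casimir_eigenvalue_def a_def b_def alpha_def S_def I_def
        algebra_simps power2_eq_square)
  moreover have "a + b = 2 * S + 2 * I - 4"
    by (simp add: a_def b_def alpha_def S_def I_def algebra_simps)
  ultimately show ?thesis
    using recurrence_identity[OF nz(1,2)] by simp
qed

lemma Hkl_eqs:
  assumes "H \<in> Hkl k l"
  shows "bihom k l H" "harm2 H" "Dop H = 0" "Fop H = 0"
  using assms by (simp_all add: Hkl_def harm2_def Dux_eq Xdu_eq)

lemma casimir_Hkl:
  assumes "H \<in> Hkl k l"
  shows "casimir H = const (casimir_eigenvalue (card (UNIV :: 'n set)) k l) * (H :: 'n::finite mpoly)"
  using Hkl_eqs[OF assms] bihom_harm2_eqs[OF Hkl_eqs(1,2)[OF assms]] unfolding casimir_def casimir_eigenvalue_def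
  by (simp add: commutation_rules) (simp add: const_hom algebra_simps power2_eq_square)

lemma Cop_iter_Hkl:
  fixes H :: "'n::finite mpoly"
  assumes "2 < card (UNIV :: 'n set)" and "H \<in> Hkl k l"
  shows "bihom (k + i) (l + i) ((Cop ^^ i) H) \<and> harm2 ((Cop ^^ i) H)
    \<and> casimir ((Cop ^^ i) H) = const (casimir_eigenvalue (card (UNIV :: 'n set)) k l) * (Cop ^^ i) H"
proof (induction i)
  case 0
  then show ?case
    using Hkl_eqs[OF assms(2)] casimir_Hkl[OF assms(2)] by simp
next
  case (Suc i)
  then have X: "bihom (k + i) (l + i) ((Cop ^^ i) H)" "harm2 ((Cop ^^ i) H)"
    and eigen: "casimir ((Cop ^^ i) H) = const (casimir_eigenvalue (card (UNIV :: 'n set)) k l) * (Cop ^^ i) H"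
    by simp_all
  have "(Cop ^^ Suc i) H = ux_harm (k + i) (l + i) ((Cop ^^ i) H)"
    using Cop_eq_ux_harm[OF X assms(1)] by simp
  then show ?case
    using bihom_ux_harm[OF X] harm2_ux_parts(1)[OF X assms(1)]
    by (simp add: casimir_ux_harm eigen ux_harm_const_mult)
qed

lemma Dop_Cop_iter_Hkl:
  fixes H :: "'n::finite mpoly"
  assumes m: "4 < card (UNIV :: 'n set)" and H: "H \<in> Hkl k l"
  shows "Dop ((Cop ^^ Suc i) H) = const (complex_of_real (cconst (card (UNIV :: 'n set)) (Suc i) k l)) * (Cop ^^ i) H"
proof -
  let ?m = "card (UNIV :: 'n set)" and ?lam = "casimir_eigenvalue (card (UNIV :: 'n set)) k l"
  have m2: "2 < ?m"
    using m by simp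
  have X: "bihom (k + j) (l + j) ((Cop ^^ j) H)" "harm2 ((Cop ^^ j) H)"
    "casimir ((Cop ^^ j) H) = const ?lam * (Cop ^^ j) H" for j
    using Cop_iter_Hkl[OF m2 H] by simp_all
  have Cop_iter: "(Cop ^^ Suc j) H = ux_harm (k + j) (l + j) ((Cop ^^ j) H)" for j
    using Cop_eq_ux_harm[OF X(1,2) m2] by simp
  have step: "Dop ((Cop ^^ Suc j) H) = const (sigma ?m (k + j) (l + j) ?lam + rho ?m (k + j) (l + j)
      * complex_of_real (cconst ?m j k l)) * (Cop ^^ j) H"
    if tail: "ux_harm (k + j - 1) (l + j - 1) (Dop ((Cop ^^ j) H))
      = const (complex_of_real (cconst ?m j k l)) * (Cop ^^ j) H" for j
    unfolding Cop_iter Dop_ux_harm[OF X m2] tail by (simp add: const_hom algebra_simps)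
  have "ux_harm (k + j - 1) (l + j - 1) (Dop ((Cop ^^ j) H))
      = const (complex_of_real (cconst ?m j k l)) * (Cop ^^ j) H" for j
  proof (induction j)
    case 0
    then show ?case
      using Hkl_eqs(3)[OF H] by (simp add: ux_harm_def cconst_def const_0)
  next
    case (Suc j)
    have "Dop ((Cop ^^ Suc j) H) = const (complex_of_real (cconst ?m (Suc j) k l)) * (Cop ^^ j) H"
      using step[OF Suc.IH] cconst_Suc[OF m] by simp
    then show ?case
      by (simp only: ux_harm_const_mult Cop_iter add_Suc_right diff_Suc_1)
  qed
  then show ?thesis
    using step cconst_Suc[OF m] by simp
qed

theorem proposition4p3:
  fixes H :: "'n::finite mpoly" and k l i :: nat
  assumes "card (UNIV :: 'n set) > 4" and "l \<le> k" and "H \<in> Hkl k l" and "0 < i"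
  shows "Aop ((Cop ^^ i) H) = const (complex_of_real (cconst (card (UNIV :: 'n set)) i k l)) * (Cop ^^ (i - 1)) H"
proof -
  obtain j where i: "i = Suc j"
    using assms(4) by (cases i) auto
  have "2 < card (UNIV :: 'n set)"
    using assms(1) by simp
  then have "Aop ((Cop ^^ i) H) = Dop ((Cop ^^ i) H)"
    using Cop_iter_Hkl[OF _ assms(3), of i] Aop_eq_Dop by blast
  also have "\<dots> = const (complex_of_real (cconst (card (UNIV :: 'n set)) i k l)) * (Cop ^^ j) H"
    unfolding i by (rule Dop_Cop_iter_Hkl[OF assms(1,3)])
  finally show ?thesis
    by (simp add: i)
qed

end
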